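(* Let $a,b\in\mathbb{R}$ with $0\le a<b$, let $\alpha\in(0,1]$, and let $f:[a,b]\to\mathbb{R}$ be $\alpha$-fractional differentiable. Let $M:=\sup_{t\in(a,b)}|D_\alpha f(t)|$. Then for $t\in[a,b]$, $$ \left|f(t)-\frac{\alpha}{b^\alpha-a^\alpha}\int_a^b f(s)\,d_\alpha s\right|\le\frac{M}{2\alpha(b^\alpha-a^\alpha)}\left[(t^\alpha-a^\alpha)^2+(b^\alpha-t^\alpha)^2\right]. $$ This inequality is sharp in the sense that the right-hand side cannot be replaced by a smaller one.
   Context: The conformable $\alpha$-fractional derivative is $D_\alpha f(t):=\lim_{\varepsilon\to 0}\frac{f(t+\varepsilon t^{1-\alpha})-f(t)}{\varepsilon}$ for $t>0$, $D_\alpha f(0):=\lim_{t\to0^+}D_\alpha f(t)$. Integrals: $\int_a^b h(s)\,d_\alpha s:=\int_a^b h(s)s^{\alpha-1}\,ds$. *)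

theory Defs
  imports "HOL-Analysis.Analysis"
begin

definition conf_has_deriv_within ::
  "real \<Rightarrow> (real \<Rightarrow> real) \<Rightarrow> real \<Rightarrow> real \<Rightarrow> real set \<Rightarrow> bool" where
  "conf_has_deriv_within \<alpha> f D t S \<longleftrightarrow>
     ((\<lambda>\<epsilon>. (f (t + \<epsilon> * t powr (1 - \<alpha>)) - f t) / \<epsilon>) \<longlongrightarrow> D)
       (at 0 within {\<epsilon>. t + \<epsilon> * t powr (1 - \<alpha>) \<in> S})"

definition conf_diff_on ::
  "real \<Rightarrow> (real \<Rightarrow> real) \<Rightarrow> (real \<Rightarrow> real) \<Rightarrow> real \<Rightarrow> real \<Rightarrow> bool" where
  "conf_diff_on \<alpha> f Df a b \<longleftrightarrow>
     continuous_on {a..b} f \<and>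
     (\<forall>t\<in>{a..b}. 0 < t \<longrightarrow> conf_has_deriv_within \<alpha> f (Df t) t {a..b}) \<and>
     (0 \<in> {a..b} \<longrightarrow> (Df \<longlongrightarrow> Df 0) (at_right 0))"

definition conf_sup :: "(real \<Rightarrow> real) \<Rightarrow> real \<Rightarrow> real \<Rightarrow> ereal" where
  "conf_sup Df a b = (SUP t\<in>{a<..<b}. ereal \<bar>Df t\<bar>)"

definition conf_integral :: "real \<Rightarrow> real \<Rightarrow> real \<Rightarrow> (real \<Rightarrow> real) \<Rightarrow> real" where
  "conf_integral \<alpha> a b h = integral {a..b} (\<lambda>s. h s * s powr (\<alpha> - 1))"

end

theory Submission
  imports Defs
begin

text \<open>Substituting \<open>u = s powr \<alpha>\<close> reduces the statement to the classical Ostrowski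
  inequality. The function \<open>g u = f (u powr (1 / \<alpha>))\<close> has ordinary derivative
  \<open>D\<^sub>\<alpha> f (u powr (1 / \<alpha>)) / \<alpha>\<close>, so it is \<open>M / \<alpha>\<close>-Lipschitz on \<open>[a powr \<alpha>, b powr \<alpha>]\<close>, and the
  \<open>\<alpha>\<close>-integral of \<open>f\<close> over \<open>[a, b]\<close> is \<open>1 / \<alpha>\<close> times the ordinary integral of \<open>g\<close>. Ostrowski's
  inequality for Lipschitz functions then gives the bound. Equality holds for \<open>f s = s powr \<alpha>\<close>,
  for which \<open>g\<close> is the identity and \<open>D\<^sub>\<alpha> f = \<alpha>\<close>, at \<open>t = a\<close>.\<close>

lemma rescaled_difference_quotient_tendsto_iff:
  fixes f :: "real \<Rightarrow> real"
  assumes c: "0 < c"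
  shows "((\<lambda>\<epsilon>. (f (t + \<epsilon> * c) - f t) / \<epsilon>) \<longlongrightarrow> D) (at 0 within {\<epsilon>. t + \<epsilon> * c \<in> S})
     \<longleftrightarrow> (f has_real_derivative D / c) (at t within S)"
    (is "(?q \<longlongrightarrow> D) ?F \<longleftrightarrow> _")
proof -
  let ?dq = "\<lambda>y. (f y - f t) / (y - t)"
  have to_t: "filterlim (\<lambda>\<epsilon>. t + \<epsilon> * c) (at t within S) ?F"
  proof (rule filterlim_at_withinI)
    show "((\<lambda>\<epsilon>. t + \<epsilon> * c) \<longlongrightarrow> t) ?F"
      by (rule tendsto_eq_intros refl)+ simp
    show "\<forall>\<^sub>F \<epsilon> in ?F. t + \<epsilon> * c \<in> S - {t}"
      unfolding eventually_at_filter using c by (intro always_eventually) auto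
  qed
  have to_0: "filterlim (\<lambda>y. (y - t) / c) ?F (at t within S)"
  proof (rule filterlim_at_withinI)
    show "((\<lambda>y. (y - t) / c) \<longlongrightarrow> 0) (at t within S)"
      using c by (auto intro!: tendsto_eq_intros)
    show "\<forall>\<^sub>F y in at t within S. (y - t) / c \<in> {\<epsilon>. t + \<epsilon> * c \<in> S} - {0}"
      unfolding eventually_at_filter using c by (intro always_eventually) auto
  qed
  have q_eq: "?q \<epsilon> = c * ?dq (t + \<epsilon> * c)" for \<epsilon>
    using c by (cases "\<epsilon> = 0") auto
  have dq_eq: "?dq y = ?q ((y - t) / c) / c" for y
    using c by (cases "y = t") (auto simp: field_simps)
  show ?thesis
    unfolding has_field_derivative_iff
  proof
    assume "(?q \<longlongrightarrow> D) ?F"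
    from tendsto_divide[OF filterlim_compose[OF this to_0] tendsto_const[of c]]
    show "(?dq \<longlongrightarrow> D / c) (at t within S)"
      using c unfolding dq_eq by simp
  next
    assume "(?dq \<longlongrightarrow> D / c) (at t within S)"
    from tendsto_mult_left[OF filterlim_compose[OF this to_t], of c]
    show "(?q \<longlongrightarrow> D) ?F"
      using c unfolding q_eq by simp
  qed
qed

lemma conf_has_deriv_within_iff:
  assumes "0 < t"
  shows "conf_has_deriv_within \<alpha> f D t S
     \<longleftrightarrow> (f has_real_derivative D * t powr (\<alpha> - 1)) (at t within S)"
proof -
  have "D / t powr (1 - \<alpha>) = D * t powr (\<alpha> - 1)"
    using powr_minus[of t "1 - \<alpha>"] by (simp add: divide_inverse)
  then show ?thesis
    using rescaled_difference_quotient_tendsto_iff[where c = "t powr (1 - \<alpha>)"] assms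
    unfolding conf_has_deriv_within_def by simp
qed

lemma powr_le_powr_iff:
  fixes x y \<alpha> :: real
  assumes "0 \<le> x" "0 \<le> y" "0 < \<alpha>"
  shows "x powr \<alpha> \<le> y powr \<alpha> \<longleftrightarrow> x \<le> y"
  using assms powr_mono2[of \<alpha> x y] powr_less_mono2[of \<alpha> y x] by fastforce

lemma powr_less_powr_iff:
  fixes x y \<alpha> :: real
  assumes "0 \<le> x" "0 \<le> y" "0 < \<alpha>"
  shows "x powr \<alpha> < y powr \<alpha> \<longleftrightarrow> x < y"
  using powr_le_powr_iff[OF assms(2,1,3)] by (simp add: not_le[symmetric])

lemma powr_root_mem_Icc:
  fixes a b u \<alpha> :: real
  assumes "0 \<le> a" "a \<le> b" "0 < \<alpha>" "u \<in> {a powr \<alpha>..b powr \<alpha>}"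
  shows "u powr (1 / \<alpha>) \<in> {a..b}"
proof -
  have "u = (u powr (1 / \<alpha>)) powr \<alpha>" "0 \<le> u"
    using assms order.trans[OF powr_ge_zero, of a \<alpha> u] by (auto simp: powr_powr)
  then show ?thesis
    using assms powr_le_powr_iff[of _ "u powr (1 / \<alpha>)" \<alpha>] powr_le_powr_iff[of "u powr (1 / \<alpha>)" _ \<alpha>]
    by auto
qed

lemma powr_root_mem_Ioo:
  fixes a b u \<alpha> :: real
  assumes "0 \<le> a" "a \<le> b" "0 < \<alpha>" "u \<in> {a powr \<alpha><..<b powr \<alpha>}"
  shows "u powr (1 / \<alpha>) \<in> {a<..<b}"
proof -
  have "u = (u powr (1 / \<alpha>)) powr \<alpha>" "0 \<le> u"
    using assms order.trans[OF powr_ge_zero, of a \<alpha> u] by (auto simp: powr_powr)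
  then show ?thesis
    using assms powr_less_powr_iff[of _ "u powr (1 / \<alpha>)" \<alpha>] powr_less_powr_iff[of "u powr (1 / \<alpha>)" _ \<alpha>]
    by auto
qed

lemma continuous_on_comp_powr_root:
  fixes f :: "real \<Rightarrow> real"
  assumes "0 \<le> a" "a \<le> b" "0 < \<alpha>" and cont: "continuous_on {a..b} f"
  shows "continuous_on {a powr \<alpha>..b powr \<alpha>} (\<lambda>u. f (u powr (1 / \<alpha>)))"
proof (rule continuous_on_compose2[OF cont])
  show "continuous_on {a powr \<alpha>..b powr \<alpha>} (\<lambda>u. u powr (1 / \<alpha>))"
    using assms by (intro continuous_on_powr' continuous_intros) (auto intro: order.trans[OF powr_ge_zero])
  show "(\<lambda>u. u powr (1 / \<alpha>)) ` {a powr \<alpha>..b powr \<alpha>} \<subseteq> {a..b}"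
    using powr_root_mem_Icc[OF assms(1-3)] by blast
qed

lemma conf_integral_powr_substitution:
  fixes f :: "real \<Rightarrow> real"
  assumes "0 \<le> a" "a \<le> b" "0 < \<alpha>" and cont: "continuous_on {a..b} f"
  shows "conf_integral \<alpha> a b f = integral {a powr \<alpha>..b powr \<alpha>} (\<lambda>u. f (u powr (1 / \<alpha>))) / \<alpha>"
proof -
  let ?g = "\<lambda>u. f (u powr (1 / \<alpha>))"
  have AB: "a powr \<alpha> \<le> b powr \<alpha>"
    using assms by (simp add: powr_mono2)
  have g_cont: "continuous_on {a powr \<alpha>..b powr \<alpha>} ?g"
    using assms by (rule continuous_on_comp_powr_root)
  have image: "(\<lambda>x. x powr \<alpha>) ` {a..b} \<subseteq> {a powr \<alpha>..b powr \<alpha>}"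
    using assms by (auto intro!: powr_mono2)
  have powr_cont: "continuous_on {a..b} (\<lambda>x. x powr \<alpha>)"
    using assms by (intro continuous_on_powr' continuous_intros) auto
  have powr_deriv: "((\<lambda>x. x powr \<alpha>) has_real_derivative \<alpha> * x powr (\<alpha> - 1)) (at x within {a..b})"
    if "x \<in> {a..b} - {0}" for x
    using that assms by (auto intro!: has_field_derivative_at_within[OF has_real_derivative_powr])
  have "((\<lambda>x. (\<alpha> * x powr (\<alpha> - 1)) *\<^sub>R ?g (x powr \<alpha>)) has_integral
      integral {a powr \<alpha>..b powr \<alpha>} ?g - integral {b powr \<alpha>..a powr \<alpha>} ?g) {a..b}"
    using has_integral_substitution_general[of "{0}", OF _ assms(2) image g_cont powr_cont powr_deriv] by simp
  moreover have "integral {b powr \<alpha>..a powr \<alpha>} ?g = 0"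
    using AB by (cases "a powr \<alpha> = b powr \<alpha>") simp_all
  ultimately have substituted: "((\<lambda>x. (\<alpha> * x powr (\<alpha> - 1)) *\<^sub>R ?g (x powr \<alpha>)) has_integral
      integral {a powr \<alpha>..b powr \<alpha>} ?g) {a..b}"
    by simp
  have integrand: "(\<alpha> * x powr (\<alpha> - 1)) *\<^sub>R ?g (x powr \<alpha>) = \<alpha> * (f x * x powr (\<alpha> - 1))"
    if "x \<in> {a..b}" for x
    using that assms by (simp add: powr_powr)
  have "((\<lambda>x. \<alpha> * (f x * x powr (\<alpha> - 1))) has_integral integral {a powr \<alpha>..b powr \<alpha>} ?g) {a..b}"
    using integrand substituted by (rule has_integral_eq)
  from has_integral_cmul[OF this, of "1 / \<alpha>"] assms(3)
  show ?thesis
    unfolding conf_integral_def by (simp add: integral_unique)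
qed

lemma lipschitz_on_Icc_if_deriv_bounded:
  fixes g g' :: "real \<Rightarrow> real"
  assumes "A < B" and cont: "continuous_on {A..B} g"
    and deriv: "\<And>u. A < u \<Longrightarrow> u < B \<Longrightarrow> (g has_real_derivative g' u) (at u)"
    and bound: "\<And>u. A < u \<Longrightarrow> u < B \<Longrightarrow> \<bar>g' u\<bar> \<le> L"
  shows "L-lipschitz_on {A..B} g"
proof (rule lipschitz_onI)
  have increment: "\<bar>g y - g x\<bar> \<le> L * (y - x)" if "x < y" "x \<in> {A..B}" "y \<in> {A..B}" for x y
  proof -
    have "continuous_on {x..y} g"
      using cont that by (auto elim!: continuous_on_subset)
    moreover have "g differentiable (at u)" if "x < u" "u < y" for u
      using deriv \<open>x \<in> {A..B}\<close> \<open>y \<in> {A..B}\<close> that real_differentiable_def by force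
    ultimately obtain l z where z: "x < z" "z < y" "DERIV g z :> l" "g y - g x = (y - x) * l"
      using MVT[OF \<open>x < y\<close>] by blast
    have "A < z" "z < B"
      using z that by auto
    then have "\<bar>l\<bar> \<le> L"
      using bound deriv DERIV_unique[OF z(3)] by metis
    then show ?thesis
      using z(4) \<open>x < y\<close> by (simp add: abs_mult mult_right_mono mult.commute)
  qed
  show "dist (g x) (g y) \<le> L * dist x y" if "x \<in> {A..B}" "y \<in> {A..B}" for x y
    using increment[of x y] increment[of y x] that
    by (cases x y rule: linorder_cases) (auto simp: dist_real_def abs_minus_commute)
  show "0 \<le> L"
    using bound[of "(A + B) / 2"] \<open>A < B\<close> by simp
qed

lemma has_integral_abs_diff:
  fixes A B T :: real
  assumes "A \<le> T" "T \<le> B"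
  shows "((\<lambda>u. \<bar>T - u\<bar>) has_integral ((T - A)\<^sup>2 + (B - T)\<^sup>2) / 2) {A..B}"
proof -
  have "((\<lambda>u. T - u) has_integral (T * T - T\<^sup>2 / 2) - (T * A - A\<^sup>2 / 2)) {A..T}"
    by (rule fundamental_theorem_of_calculus[OF assms(1)])
      (auto intro!: derivative_eq_intros simp: has_real_derivative_iff_has_vector_derivative[symmetric])
  moreover have "(T * T - T\<^sup>2 / 2) - (T * A - A\<^sup>2 / 2) = (T - A)\<^sup>2 / 2"
    by (simp add: power2_eq_square field_simps)
  ultimately have "((\<lambda>u. T - u) has_integral (T - A)\<^sup>2 / 2) {A..T}"
    by simp
  then have left: "((\<lambda>u. \<bar>T - u\<bar>) has_integral (T - A)\<^sup>2 / 2) {A..T}"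
    by (rule has_integral_spike_finite[where S = "{}", rotated 2]) auto
  have "((\<lambda>u. u - T) has_integral (B\<^sup>2 / 2 - T * B) - (T\<^sup>2 / 2 - T * T)) {T..B}"
    by (rule fundamental_theorem_of_calculus[OF assms(2)])
      (auto intro!: derivative_eq_intros simp: has_real_derivative_iff_has_vector_derivative[symmetric])
  moreover have "(B\<^sup>2 / 2 - T * B) - (T\<^sup>2 / 2 - T * T) = (B - T)\<^sup>2 / 2"
    by (simp add: power2_eq_square field_simps)
  ultimately have "((\<lambda>u. u - T) has_integral (B - T)\<^sup>2 / 2) {T..B}"
    by simp
  then have right: "((\<lambda>u. \<bar>T - u\<bar>) has_integral (B - T)\<^sup>2 / 2) {T..B}"
    by (rule has_integral_spike_finite[where S = "{}", rotated 2]) auto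
  show ?thesis
    using has_integral_combine[OF assms left right] by (simp add: add_divide_distrib)
qed

lemma ostrowski_inequality_lipschitz:
  fixes g :: "real \<Rightarrow> real"
  assumes lip: "L-lipschitz_on {A..B} g" and "A < B" and T: "T \<in> {A..B}"
  shows "\<bar>g T - integral {A..B} g / (B - A)\<bar> \<le> L * ((T - A)\<^sup>2 + (B - T)\<^sup>2) / (2 * (B - A))"
proof -
  have "g integrable_on {A..B}"
    using lipschitz_on_continuous_on[OF lip] by (rule integrable_continuous_interval)
  then have diff: "((\<lambda>u. g T - g u) has_integral (B - A) * g T - integral {A..B} g) {A..B}"
    using has_integral_diff[OF has_integral_const_real[of "g T" A B]] \<open>A < B\<close>
    by (simp add: integrable_integral mult.commute)
  have dominant: "((\<lambda>u. L * \<bar>T - u\<bar>) has_integral L * (((T - A)\<^sup>2 + (B - T)\<^sup>2) / 2)) {A..B}"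
    using T by (intro has_integral_mult_right has_integral_abs_diff) auto
  have "\<bar>g T - g u\<bar> \<le> L * \<bar>T - u\<bar>" if "u \<in> {A..B}" for u
    using lipschitz_onD[OF lip T that] by (simp add: dist_real_def)
  then have "\<bar>(B - A) * g T - integral {A..B} g\<bar> \<le> L * (((T - A)\<^sup>2 + (B - T)\<^sup>2) / 2)"
    using integral_norm_bound_integral[OF has_integral_integrable[OF diff] has_integral_integrable[OF dominant]]
    unfolding integral_unique[OF diff] integral_unique[OF dominant] by simp
  then have "\<bar>(B - A) * g T - integral {A..B} g\<bar> / (B - A)
      \<le> L * (((T - A)\<^sup>2 + (B - T)\<^sup>2) / 2) / (B - A)"
    using \<open>A < B\<close> by (intro divide_right_mono) auto
  moreover have "g T - integral {A..B} g / (B - A) = ((B - A) * g T - integral {A..B} g) / (B - A)"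
    using \<open>A < B\<close> by (simp add: field_simps)
  ultimately show ?thesis
    using \<open>A < B\<close> by simp
qed

lemma conf_diff_on_has_real_derivative:
  assumes "conf_diff_on \<alpha> f Df a b" "0 \<le> a" "a < s" "s < b"
  shows "(f has_real_derivative Df s * s powr (\<alpha> - 1)) (at s)"
proof -
  have "conf_has_deriv_within \<alpha> f (Df s) s {a..b}"
    using assms unfolding conf_diff_on_def by auto
  then have "(f has_real_derivative Df s * s powr (\<alpha> - 1)) (at s within {a..b})"
    using conf_has_deriv_within_iff assms by auto
  then show ?thesis
    using at_within_Icc_at[OF assms(3,4)] by simp
qed

lemma conf_ostrowski_inequality:
  fixes f Df :: "real \<Rightarrow> real"
  assumes "0 \<le> a" "a < b" "0 < \<alpha>" and diff: "conf_diff_on \<alpha> f Df a b"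
    and bound: "\<And>s. a < s \<Longrightarrow> s < b \<Longrightarrow> \<bar>Df s\<bar> \<le> m"
    and t: "t \<in> {a..b}"
  shows "\<bar>f t - \<alpha> / (b powr \<alpha> - a powr \<alpha>) * conf_integral \<alpha> a b f\<bar>
     \<le> m * (1 / (2 * \<alpha> * (b powr \<alpha> - a powr \<alpha>)) *
              ((t powr \<alpha> - a powr \<alpha>)\<^sup>2 + (b powr \<alpha> - t powr \<alpha>)\<^sup>2))"
proof -
  define A B T where "A = a powr \<alpha>" and "B = b powr \<alpha>" and "T = t powr \<alpha>"
  define g where "g = (\<lambda>u. f (u powr (1 / \<alpha>)))"
  have "A < B"
    unfolding A_def B_def using assms by (simp add: powr_less_mono2)
  have T_mem: "T \<in> {A..B}"
    unfolding A_def B_def T_def using assms by (auto intro: powr_mono2)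
  have ft: "f t = g T"
    unfolding g_def T_def using assms by (simp add: powr_powr)
  have cont: "continuous_on {a..b} f"
    using diff by (simp add: conf_diff_on_def)
  have g_deriv: "(g has_real_derivative Df (u powr (1 / \<alpha>)) / \<alpha>) (at u)" if "A < u" "u < B" for u
  proof -
    define s where "s = u powr (1 / \<alpha>)"
    have s: "a < s" "s < b"
      using powr_root_mem_Ioo[of a b \<alpha> u] assms that unfolding A_def B_def s_def by auto
    have "0 < u"
      using that \<open>0 \<le> a\<close> unfolding A_def by (meson le_less_trans powr_ge_zero)
    have "u powr (1 / \<alpha> - 1) = s powr (1 - \<alpha>)"
      using \<open>0 < u\<close> \<open>0 < \<alpha>\<close> by (simp add: s_def powr_powr field_simps)
    then have "Df s * s powr (\<alpha> - 1) * (1 / \<alpha> * u powr (1 / \<alpha> - 1)) = Df s / \<alpha>"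
      using s \<open>0 \<le> a\<close> by (simp add: powr_add[symmetric])
    moreover have "(g has_real_derivative Df s * s powr (\<alpha> - 1) * (1 / \<alpha> * u powr (1 / \<alpha> - 1))) (at u)"
      using DERIV_chain2[OF conf_diff_on_has_real_derivative[OF diff \<open>0 \<le> a\<close> s, unfolded s_def]
          has_real_derivative_powr[OF \<open>0 < u\<close>]]
      unfolding g_def s_def .
    ultimately have "(g has_real_derivative Df s / \<alpha>) (at u)"
      by (simp only:)
    then show ?thesis
      unfolding s_def .
  qed
  have "(m / \<alpha>)-lipschitz_on {A..B} g"
  proof (rule lipschitz_on_Icc_if_deriv_bounded[OF \<open>A < B\<close> _ g_deriv])
    show "continuous_on {A..B} g"
      unfolding g_def A_def B_def using assms cont by (intro continuous_on_comp_powr_root) auto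
    show "\<bar>Df (u powr (1 / \<alpha>)) / \<alpha>\<bar> \<le> m / \<alpha>" if "A < u" "u < B" for u
      using powr_root_mem_Ioo[of a b \<alpha> u] bound assms that
      unfolding A_def B_def by (auto intro: divide_right_mono)
  qed
  from ostrowski_inequality_lipschitz[OF this \<open>A < B\<close> T_mem]
  have "\<bar>g T - integral {A..B} g / (B - A)\<bar> \<le> m / \<alpha> * ((T - A)\<^sup>2 + (B - T)\<^sup>2) / (2 * (B - A))" .
  moreover have "\<alpha> * conf_integral \<alpha> a b f = integral {A..B} g"
    unfolding A_def B_def g_def
    using conf_integral_powr_substitution[OF \<open>0 \<le> a\<close> _ \<open>0 < \<alpha>\<close> cont] assms by simp
  ultimately show ?thesis
    unfolding ft A_def [symmetric] B_def [symmetric] T_def [symmetric] by (simp add: field_simps)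
qed

lemma conf_ostrowski_inequality_sup:
  fixes f Df :: "real \<Rightarrow> real"
  assumes "0 \<le> a" "a < b" "0 < \<alpha>" "conf_diff_on \<alpha> f Df a b" "t \<in> {a..b}"
  shows "ereal \<bar>f t - \<alpha> / (b powr \<alpha> - a powr \<alpha>) * conf_integral \<alpha> a b f\<bar>
     \<le> conf_sup Df a b * ereal (1 / (2 * \<alpha> * (b powr \<alpha> - a powr \<alpha>)) *
              ((t powr \<alpha> - a powr \<alpha>)\<^sup>2 + (b powr \<alpha> - t powr \<alpha>)\<^sup>2))"
proof -
  define c where "c = 1 / (2 * \<alpha> * (b powr \<alpha> - a powr \<alpha>)) *
    ((t powr \<alpha> - a powr \<alpha>)\<^sup>2 + (b powr \<alpha> - t powr \<alpha>)\<^sup>2)"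
  have "a powr \<alpha> < b powr \<alpha>"
    using assms by (simp add: powr_less_mono2)
  then have "0 < (t powr \<alpha> - a powr \<alpha>)\<^sup>2 + (b powr \<alpha> - t powr \<alpha>)\<^sup>2"
    by (cases "t powr \<alpha> = a powr \<alpha>") (auto intro: add_pos_nonneg)
  then have "0 < c"
    unfolding c_def using \<open>a powr \<alpha> < b powr \<alpha>\<close> \<open>0 < \<alpha>\<close> by simp
  have sup_upper: "ereal \<bar>Df s\<bar> \<le> conf_sup Df a b" if "a < s" "s < b" for s
    unfolding conf_sup_def using that by (intro SUP_upper) auto
  then have "0 \<le> conf_sup Df a b"
    using \<open>a < b\<close> order.trans[OF _ sup_upper[of "(a + b) / 2"]] by simp
  then have "ereal \<bar>f t - \<alpha> / (b powr \<alpha> - a powr \<alpha>) * conf_integral \<alpha> a b f\<bar>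
      \<le> conf_sup Df a b * ereal c"
  proof (cases "conf_sup Df a b")
    case (real m)
    then have "\<bar>Df s\<bar> \<le> m" if "a < s" "s < b" for s
      using sup_upper[OF that] by simp
    then show ?thesis
      using conf_ostrowski_inequality[OF assms(1-4) _ assms(5)] real unfolding c_def by simp
  qed (use \<open>0 < c\<close> in auto) \<comment> \<open>an infinite supremum needs \<open>c > 0\<close>, as \<open>\<infinity> * 0 = 0\<close> in \<open>ereal\<close>\<close>
  then show ?thesis
    unfolding c_def .
qed

lemma conf_diff_on_powr:
  assumes "0 \<le> a" "0 < \<alpha>"
  shows "conf_diff_on \<alpha> (\<lambda>s. s powr \<alpha>) (\<lambda>_. \<alpha>) a b"
  unfolding conf_diff_on_def
proof (intro conjI ballI impI)
  show "continuous_on {a..b} (\<lambda>s. s powr \<alpha>)"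
    using assms by (intro continuous_on_powr' continuous_intros) auto
  show "((\<lambda>_. \<alpha>) \<longlongrightarrow> \<alpha>) (at_right 0)"
    by simp
  show "conf_has_deriv_within \<alpha> (\<lambda>s. s powr \<alpha>) \<alpha> s {a..b}" if "0 < s" for s
    unfolding conf_has_deriv_within_iff[OF that]
    using has_field_derivative_at_within[OF has_real_derivative_powr[OF that]] .
qed

lemma conf_integral_powr:
  assumes "0 \<le> a" "a \<le> b" "0 < \<alpha>"
  shows "conf_integral \<alpha> a b (\<lambda>s. s powr \<alpha>) = ((b powr \<alpha>)\<^sup>2 - (a powr \<alpha>)\<^sup>2) / (2 * \<alpha>)"
proof -
  have "continuous_on {a..b} (\<lambda>s. s powr \<alpha>)"
    using conf_diff_on_powr[OF assms(1,3)] by (simp add: conf_diff_on_def)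
  then have "conf_integral \<alpha> a b (\<lambda>s. s powr \<alpha>)
      = integral {a powr \<alpha>..b powr \<alpha>} (\<lambda>u. (u powr (1 / \<alpha>)) powr \<alpha>) / \<alpha>"
    by (rule conf_integral_powr_substitution[OF assms])
  also have "\<dots> = integral {a powr \<alpha>..b powr \<alpha>} (\<lambda>u. u) / \<alpha>"
    using assms order.trans[OF powr_ge_zero, of a \<alpha>] by (auto intro!: integral_cong simp: powr_powr)
  also have "\<dots> = ((b powr \<alpha>)\<^sup>2 - (a powr \<alpha>)\<^sup>2) / (2 * \<alpha>)"
    using assms powr_mono2[of \<alpha> a b] by simp
  finally show ?thesis .
qed

lemma conf_sup_const:
  assumes "a < b"
  shows "conf_sup (\<lambda>_. c) a b = ereal \<bar>c\<bar>"
  unfolding conf_sup_def using assms by simp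

lemma conf_ostrowski_equality_powr:
  assumes "0 \<le> a" "a < b" "0 < \<alpha>"
  shows "ereal \<bar>a powr \<alpha> - \<alpha> / (b powr \<alpha> - a powr \<alpha>) * conf_integral \<alpha> a b (\<lambda>s. s powr \<alpha>)\<bar>
     = conf_sup (\<lambda>_. \<alpha>) a b * ereal (1 / (2 * \<alpha> * (b powr \<alpha> - a powr \<alpha>)) *
              ((a powr \<alpha> - a powr \<alpha>)\<^sup>2 + (b powr \<alpha> - a powr \<alpha>)\<^sup>2))"
proof -
  define A B where "A = a powr \<alpha>" and "B = b powr \<alpha>"
  have "A < B"
    unfolding A_def B_def using assms by (simp add: powr_less_mono2)
  have "A - \<alpha> / (B - A) * ((B\<^sup>2 - A\<^sup>2) / (2 * \<alpha>)) = - ((B - A) / 2)"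
    using \<open>A < B\<close> \<open>0 < \<alpha>\<close> by (simp add: field_simps power2_eq_square)
  moreover have "\<alpha> * (1 / (2 * \<alpha> * (B - A)) * ((A - A)\<^sup>2 + (B - A)\<^sup>2)) = (B - A) / 2"
    using \<open>A < B\<close> \<open>0 < \<alpha>\<close> by (simp add: field_simps power2_eq_square)
  ultimately show ?thesis
    using \<open>A < B\<close> conf_integral_powr[of a b \<alpha>] conf_sup_const[of a b \<alpha>] assms
    unfolding A_def B_def by simp
qed

theorem mainTheorem16:
  fixes a b \<alpha> :: real
  assumes "0 \<le> a" and "a < b" and "0 < \<alpha>" and "\<alpha> \<le> 1"
  shows "(\<forall>f Df. conf_diff_on \<alpha> f Df a b \<longrightarrow>
            (\<forall>t\<in>{a..b}.
               ereal \<bar>f t - \<alpha> / (b powr \<alpha> - a powr \<alpha>) * conf_integral \<alpha> a b f\<bar>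
               \<le> conf_sup Df a b * ereal (1 / (2 * \<alpha> * (b powr \<alpha> - a powr \<alpha>)) *
                    ((t powr \<alpha> - a powr \<alpha>)\<^sup>2 + (b powr \<alpha> - t powr \<alpha>)\<^sup>2))))
       \<and> (\<exists>f Df. \<exists>t\<in>{a..b}. conf_diff_on \<alpha> f Df a b \<and> 0 < conf_sup Df a b \<and>
               ereal \<bar>f t - \<alpha> / (b powr \<alpha> - a powr \<alpha>) * conf_integral \<alpha> a b f\<bar>
               = conf_sup Df a b * ereal (1 / (2 * \<alpha> * (b powr \<alpha> - a powr \<alpha>)) *
                    ((t powr \<alpha> - a powr \<alpha>)\<^sup>2 + (b powr \<alpha> - t powr \<alpha>)\<^sup>2)))"
proof -
  have "0 < conf_sup (\<lambda>_. \<alpha>) a b"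
    using conf_sup_const[OF \<open>a < b\<close>] \<open>0 < \<alpha>\<close> by simp
  then show ?thesis
    using conf_ostrowski_inequality_sup[OF assms(1-3)] conf_diff_on_powr[OF assms(1,3)]
      conf_ostrowski_equality_powr[OF assms(1-3)] \<open>a < b\<close>
    by (intro conjI allI impI ballI exI[of _ "\<lambda>s. s powr \<alpha>"] exI[of _ "\<lambda>_. \<alpha>"] bexI[of _ a]) simp_all
qed

end
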